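(* Let $\mathcal{X}=\{x_1,\dots,x_n\}$, $\mathcal{X}_{\mathrm{in}}\subseteq\mathcal{X}$ with $n_{\mathrm{in}}$ points, let $\mathbf{k}$ be a kernel generating $K=(\mathbf{k}(x_i,x_j))_{i,j=1}^n$, and suppose the thinning algorithm $\mathrm{Alg}$ (output $\mathcal{X}_{\mathrm{out}}$ of size $n_{\mathrm{out}}$) is $(K,\nu,\delta)$-sub-Gaussian with event $\mathcal{E}$ of probability at least $1-\delta/2$. Then for all $t\ge0$, $$\mathbb{P}\big(\mathcal{E}\cap\{\mathrm{MMD}_{\mathbf{k}}(\mathbb{P}_{\mathrm{in}},\mathbb{P}_{\mathrm{out}})\ge a+v\sqrt t\}\big)\le e^{-t},$$ with $a=\nu\sqrt e+\min_{r\le n_{\mathrm{in}}}\big\{\nu\sqrt{e^2r}+\sqrt{\lambda_{r+1}(K)(\frac1{n_{\mathrm{out}}}-\frac1{n_{\mathrm{in}}})}\big\}$ and $v=\nu\sqrt e$; that is, $\mathrm{Alg}$ is $\mathbf{k}$-sub-Gaussian on $\mathcal{E}$ with shift $a$ and parameter $v$.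
   Context: $p_{\mathrm{in},i}=\mathbf{1}\{x_i\in\mathcal{X}_{\mathrm{in}}\}/n_{\mathrm{in}}$, $q_{\mathrm{out},i}=\mathbf{1}\{x_i\in\mathcal{X}_{\mathrm{out}}\}/n_{\mathrm{out}}$; $\mathbb{P}_{\mathrm{in}},\mathbb{P}_{\mathrm{out}}$ are the corresponding empirical distributions and $\mathrm{MMD}_{\mathbf{k}}(\mathbb{P}_{\mathrm{in}},\mathbb{P}_{\mathrm{out}})=\sqrt{(p_{\mathrm{in}}-q_{\mathrm{out}})^\top K(p_{\mathrm{in}}-q_{\mathrm{out}})}$. $\lambda_j(K)$ is the $j$-th largest eigenvalue of $K$, with $\lambda_{n+1}(K):=0$; $r$ ranges over nonnegative integers. $\mathrm{Alg}$ is $(K,\nu,\delta)$-sub-Gaussian if $K$ is SPSD, $\nu>0$, $\delta\in[0,1)$, and there is an event $\mathcal{E}$ with $\mathbb{P}(\mathcal{E})\ge1-\delta/2$ such that $\mathbb{E}[\exp(\langle u,K(p_{\mathrm{in}}-q_{\mathrm{out}})\rangle)\mathbf{1}_{\mathcal{E}}]\le\exp(\frac{\nu^2}{2}u^\top Ku)$ for all $u\in\mathbb{R}^n$. *)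

theory Defs
  imports "HOL-Analysis.Analysis" "HOL-Probability.Probability"
          "HOL-Computational_Algebra.Polynomial"
begin

definition kernel_matrix :: "('x \<Rightarrow> 'x \<Rightarrow> real) \<Rightarrow> ('n::finite \<Rightarrow> 'x) \<Rightarrow> real^'n^'n" where
  "kernel_matrix k x = (\<chi> i j. k (x i) (x j))"

definition SPSD :: "real^'n^'n \<Rightarrow> bool" where
  "SPSD K \<longleftrightarrow> transpose K = K \<and> (\<forall>u::real^'n. 0 \<le> u \<bullet> (K *v u))"

definition charpoly :: "real^'n^'n \<Rightarrow> real poly" where
  "charpoly K = det (\<chi> i j. (if i = j then [:0, 1:] else 0) - [:K $ i $ j:])"

text \<open>\<lambda>_j(K): j-th largest eigenvalue of K (counted with multiplicity, j \<ge> 1);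
  0 beyond the number of eigenvalues (so \<lambda>_{n+1}(K) = 0).\<close>
definition eig :: "real^'n^'n \<Rightarrow> nat \<Rightarrow> real" where
  "eig K j = (let ev = rev (sorted_list_of_multiset (proots (charpoly K)))
              in if 1 \<le> j \<and> j \<le> length ev then ev ! (j - 1) else 0)"

definition emp :: "'n::finite set \<Rightarrow> real^'n" where
  "emp S = (\<chi> i. (if i \<in> S then 1 else 0) / real (card S))"

definition MMD :: "real^'n^'n \<Rightarrow> real^'n \<Rightarrow> real^'n \<Rightarrow> real" where
  "MMD K p q = sqrt ((p - q) \<bullet> (K *v (p - q)))"

text \<open>(K,\<nu>,\<delta>)-sub-Gaussian with witnessing event E: algorithm output Xout on the
  probability space M, input index set Xin.\<close>
definition sub_gaussian_event ::
  "'a measure \<Rightarrow> 'n::finite set \<Rightarrow> ('a \<Rightarrow> 'n set) \<Rightarrow> real^'n^'n \<Rightarrow> real \<Rightarrow> real \<Rightarrow> 'a set \<Rightarrow> bool" where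
  "sub_gaussian_event M Xin Xout K \<nu> \<delta> E \<longleftrightarrow>
     SPSD K \<and> \<nu> > 0 \<and> 0 \<le> \<delta> \<and> \<delta> < 1 \<and> E \<in> sets M \<and>
     measure M E \<ge> 1 - \<delta> / 2 \<and>
     (\<forall>u::real^'n.
        (\<integral>\<^sup>+ \<omega>. ennreal (exp (u \<bullet> (K *v (emp Xin - emp (Xout \<omega>)))) * indicator E \<omega>) \<partial>M)
          \<le> ennreal (exp (\<nu>\<^sup>2 / 2 * (u \<bullet> (K *v u)))))"

definition alg_sub_gaussian ::
  "'a measure \<Rightarrow> 'n::finite set \<Rightarrow> ('a \<Rightarrow> 'n set) \<Rightarrow> real^'n^'n \<Rightarrow> real \<Rightarrow> real \<Rightarrow> bool" where
  "alg_sub_gaussian M Xin Xout K \<nu> \<delta> \<longleftrightarrow> (\<exists>E. sub_gaussian_event M Xin Xout K \<nu> \<delta> E)"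

definition k_sub_gaussian_on ::
  "'a measure \<Rightarrow> 'n::finite set \<Rightarrow> ('a \<Rightarrow> 'n set) \<Rightarrow> real^'n^'n \<Rightarrow> 'a set \<Rightarrow> real \<Rightarrow> real \<Rightarrow> bool" where
  "k_sub_gaussian_on M Xin Xout K E a v \<longleftrightarrow>
     (\<forall>t::real. t \<ge> 0 \<longrightarrow>
        measure M (E \<inter> {\<omega> \<in> space M. MMD K (emp Xin) (emp (Xout \<omega>)) \<ge> a + v * sqrt t})
          \<le> exp (- t))"

end

theory Submission
  imports Defs
begin

text \<open>Diagonalise \<open>K = \<Sum>\<^sub>i \<mu>\<^sub>i v\<^sub>i v\<^sub>i\<^sup>T\<close> and fix a rank \<open>r\<close>. At most \<open>r\<close> eigenvalues
  exceed \<open>c = \<lambda>\<^sub>r\<^sub>+\<^sub>1(K)\<close>; let \<open>T\<close> be their indices. For \<open>w = p\<^sub>i\<^sub>n - q\<^sub>o\<^sub>u\<^sub>t\<close> the squared MMD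
  splits into a head \<open>\<parallel>Z\<parallel>\<^sup>2\<close>, where \<open>Z\<^sub>i = \<surd>\<mu>\<^sub>i \<langle>v\<^sub>i, w\<rangle>\<close> for \<open>i \<in> T\<close>, and a tail of at most
  \<open>c \<parallel>w\<parallel>\<^sup>2 = c (1/n\<^sub>o\<^sub>u\<^sub>t - 1/n\<^sub>i\<^sub>n)\<close>. The vector \<open>Z\<close> is \<open>\<nu>\<close>-sub-Gaussian on \<open>E\<close>, because
  \<open>\<langle>s, Z\<rangle> = \<langle>u, K w\<rangle>\<close> and \<open>u\<^sup>T K u = \<parallel>s\<parallel>\<^sup>2\<close> for \<open>u = \<Sum>\<^sub>i\<^sub>\<in>\<^sub>T s\<^sub>i \<mu>\<^sub>i\<^sup>-\<^sup>1\<^sup>/\<^sup>2 v\<^sub>i\<close>.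
  Replacing its coordinates one at a time by Gaussian integrals bounds
  \<open>E[exp (\<parallel>Z\<parallel>\<^sup>2 / (e \<nu>\<^sup>2)) 1\<^sub>E]\<close> by \<open>(1 - 2/e)\<^sup>-\<^sup>|\<^sup>T\<^sup>|\<^sup>/\<^sup>2 \<le> exp (e r)\<close>, and Chernoff's
  inequality then gives the tail bound for every \<open>r\<close>, in particular for the minimising one.\<close>

section \<open>Gaussian integrals\<close>

lemma nn_integral_normal_density:
  "0 < \<sigma> \<Longrightarrow> (\<integral>\<^sup>+x. ennreal (normal_density \<mu> \<sigma> x) \<partial>lborel) = 1"
  using integral_normal_density[of \<mu> \<sigma>] integrable_normal_density[of \<mu> \<sigma>]
  by (subst nn_integral_eq_integral) auto

lemma nn_integral_exp_mult_std_normal: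
  "(\<integral>\<^sup>+g. ennreal (exp (a * g) * std_normal_density g) \<partial>lborel) = ennreal (exp (a\<^sup>2 / 2))"
proof -
  have "exp (a * g) * std_normal_density g = exp (a\<^sup>2 / 2) * normal_density a 1 g" for g
    by (simp add: normal_density_def mult_exp_exp power2_eq_square algebra_simps
        diff_divide_distrib add_divide_distrib)
  then have "(\<integral>\<^sup>+g. ennreal (exp (a * g) * std_normal_density g) \<partial>lborel)
      = (\<integral>\<^sup>+g. ennreal (exp (a\<^sup>2 / 2)) * ennreal (normal_density a 1 g) \<partial>lborel)"
    by (simp add: ennreal_mult)
  also have "\<dots> = ennreal (exp (a\<^sup>2 / 2))"
    by (subst nn_integral_cmult) (auto simp: nn_integral_normal_density)
  finally show ?thesis .
qed

lemma nn_integral_exp_square_std_normal: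
  assumes "0 \<le> \<theta>" "\<theta> < 1"
  shows "(\<integral>\<^sup>+g. ennreal (exp (\<theta> * g\<^sup>2 / 2) * std_normal_density g) \<partial>lborel)
    = ennreal ((1 - \<theta>) powr (-1/2))"
proof -
  define s where "s = 1 / sqrt (1 - \<theta>)"
  have s: "0 < s" "s\<^sup>2 = 1 / (1 - \<theta>)"
    using assms by (auto simp: s_def power_divide)
  have sqrt_s: "sqrt (2 * pi * s\<^sup>2) = sqrt (2 * pi) * s"
    by (simp only: real_sqrt_mult) (use s(1) in simp)
  have "exp (\<theta> * g\<^sup>2 / 2) * std_normal_density g = s * normal_density 0 s g" for g
  proof -
    have "- (g - 0)\<^sup>2 / (2 * s\<^sup>2) = \<theta> * g\<^sup>2 / 2 - g\<^sup>2 / 2"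
      using assms by (simp add: s(2) field_simps)
    then show ?thesis
      using s(1) by (simp add: normal_density_def sqrt_s mult_exp_exp)
  qed
  then have "(\<integral>\<^sup>+g. ennreal (exp (\<theta> * g\<^sup>2 / 2) * std_normal_density g) \<partial>lborel)
      = (\<integral>\<^sup>+g. ennreal s * ennreal (normal_density 0 s g) \<partial>lborel)"
    using s by (simp add: ennreal_mult)
  also have "\<dots> = ennreal s"
    by (subst nn_integral_cmult) (auto simp: nn_integral_normal_density[OF s(1)])
  finally show ?thesis
    using assms by (simp add: s_def powr_minus_divide powr_half_sqrt)
qed

text \<open>Gaussian decoupling: \<open>exp (c\<^sup>2 / 2)\<close> is the moment generating function of a standard
  Gaussian at \<open>c\<close>, so a quadratic term in the exponent can be traded for a linear one
  at the cost of an integral over an auxiliary Gaussian variable \<open>g\<close>.\<close>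

lemma sum_exp_half_square_le_gaussian:
  fixes p A c :: "'b \<Rightarrow> real"
  assumes p: "\<And>b. b \<in> B \<Longrightarrow> 0 \<le> p b" and C: "0 \<le> C"
    and \<theta>: "0 \<le> \<theta>" "\<theta> < 1"
    and bound: "\<And>g. (\<Sum>b\<in>B. p b * exp (A b + g * c b)) \<le> C * exp (\<theta> * g\<^sup>2 / 2)"
  shows "(\<Sum>b\<in>B. p b * exp (A b + (c b)\<^sup>2 / 2)) \<le> C * (1 - \<theta>) powr (-1/2)"
proof -
  let ?F = "\<lambda>g. \<Sum>b\<in>B. p b * exp (A b + g * c b)"
  have gauss_term: "ennreal (p b * exp (A b + (c b)\<^sup>2 / 2))
      = (\<integral>\<^sup>+g. ennreal (p b * exp (A b + g * c b) * std_normal_density g) \<partial>lborel)"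
    if "b \<in> B" for b
  proof -
    have "ennreal (p b * exp (A b + (c b)\<^sup>2 / 2))
        = ennreal (p b * exp (A b)) * (\<integral>\<^sup>+g. ennreal (exp (c b * g) * std_normal_density g) \<partial>lborel)"
      using p[OF that] by (simp add: nn_integral_exp_mult_std_normal ennreal_mult[symmetric] exp_add)
    also have "\<dots> = (\<integral>\<^sup>+g. ennreal (p b * exp (A b + g * c b) * std_normal_density g) \<partial>lborel)"
      using p[OF that]
      by (subst nn_integral_cmult[symmetric]) (auto intro!: nn_integral_cong
          simp: ennreal_mult[symmetric] exp_add mult.commute mult.left_commute)
    finally show ?thesis .
  qed
  have "ennreal (\<Sum>b\<in>B. p b * exp (A b + (c b)\<^sup>2 / 2))
      = (\<Sum>b\<in>B. \<integral>\<^sup>+g. ennreal (p b * exp (A b + g * c b) * std_normal_density g) \<partial>lborel)"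
    using p by (simp add: sum_ennreal[symmetric] gauss_term)
  also have "\<dots> = (\<integral>\<^sup>+g. (\<Sum>b\<in>B. ennreal (p b * exp (A b + g * c b) * std_normal_density g)) \<partial>lborel)"
    by (rule nn_integral_sum[symmetric]) simp
  also have "\<dots> = (\<integral>\<^sup>+g. ennreal (?F g * std_normal_density g) \<partial>lborel)"
    using p by (intro nn_integral_cong) (simp add: sum_ennreal sum_distrib_right)
  also have "\<dots> \<le> (\<integral>\<^sup>+g. ennreal C * ennreal (exp (\<theta> * g\<^sup>2 / 2) * std_normal_density g) \<partial>lborel)"
    using C by (intro nn_integral_mono)
      (simp add: ennreal_mult[symmetric] mult.assoc[symmetric] mult_right_mono bound)
  also have "\<dots> = ennreal C * ennreal ((1 - \<theta>) powr (-1/2))"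
    using nn_integral_exp_square_std_normal[OF \<theta>] by (subst nn_integral_cmult) auto
  also have "\<dots> = ennreal (C * (1 - \<theta>) powr (-1/2))"
    using C by (simp add: ennreal_mult)
  finally show ?thesis
    using C by (simp add: ennreal_le_iff)
qed

lemma sum_fun_upd:
  fixes F :: "'i \<Rightarrow> 'a \<Rightarrow> 'c::ab_group_add"
  assumes "finite T" "j \<in> T"
  shows "(\<Sum>i\<in>T. F i ((s(j := x)) i)) = (\<Sum>i\<in>T. F i (s i)) - F j (s j) + F j x"
proof -
  have "(\<Sum>i\<in>T - {j}. F i ((s(j := x)) i)) = (\<Sum>i\<in>T - {j}. F i (s i))"
    by (intro sum.cong) auto
  then show ?thesis
    using assms by (simp add: sum.remove algebra_simps)
qed

text \<open>Decoupling one coordinate at a time turns the sub-Gaussian bound on the linear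
  statistics of \<open>Z\<close> into a bound on the exponential moment of \<open>\<parallel>Z\<parallel>\<^sup>2\<close>, each coordinate
  costing a factor \<open>(1 - \<theta>)\<^sup>-\<^sup>1\<^sup>/\<^sup>2\<close>.\<close>

lemma subgaussian_sum_exp_norm_sq_le:
  fixes p :: "'b \<Rightarrow> real" and Z :: "'b \<Rightarrow> 'i \<Rightarrow> real"
  assumes T: "finite T" and p: "\<And>b. b \<in> B \<Longrightarrow> 0 \<le> p b"
    and \<nu>: "0 < \<nu>" and \<theta>: "0 \<le> \<theta>" "\<theta> < 1"
    and subg: "\<And>s. (\<Sum>b\<in>B. p b * exp (\<Sum>i\<in>T. s i * Z b i)) \<le> exp (\<nu>\<^sup>2 / 2 * (\<Sum>i\<in>T. (s i)\<^sup>2))"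
  shows "(\<Sum>b\<in>B. p b * exp (\<theta> / (2 * \<nu>\<^sup>2) * (\<Sum>i\<in>T. (Z b i)\<^sup>2)))
    \<le> (1 - \<theta>) powr (- real (card T) / 2)"
proof -
  define a where "a = sqrt \<theta> / \<nu>"
  have a: "\<nu>\<^sup>2 / 2 * (a * g)\<^sup>2 = \<theta> * g\<^sup>2 / 2" "\<theta> / (2 * \<nu>\<^sup>2) * z\<^sup>2 = (a * z)\<^sup>2 / 2" for g z
    using \<nu> \<theta> by (auto simp: a_def power_divide power_mult_distrib)
  have "(\<Sum>b\<in>B. p b * exp ((\<Sum>i\<in>T. s i * Z b i) + \<theta> / (2 * \<nu>\<^sup>2) * (\<Sum>i\<in>J. (Z b i)\<^sup>2)))
      \<le> exp (\<nu>\<^sup>2 / 2 * (\<Sum>i\<in>T. (s i)\<^sup>2)) * (1 - \<theta>) powr (- real (card J) / 2)"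
    if "J \<subseteq> T" "\<forall>i\<in>J. s i = 0" for J s
    using finite_subset[OF that(1) T] that
  proof (induction J arbitrary: s rule: finite_induct)
    case empty
    then show ?case using subg[of s] \<theta> by simp
  next
    case (insert j J)
    have j: "j \<in> T" "s j = 0" using insert.prems by auto
    define Q where "Q b = (\<Sum>i\<in>T. s i * Z b i) + \<theta> / (2 * \<nu>\<^sup>2) * (\<Sum>i\<in>J. (Z b i)\<^sup>2)" for b
    define C where "C = exp (\<nu>\<^sup>2 / 2 * (\<Sum>i\<in>T. (s i)\<^sup>2)) * (1 - \<theta>) powr (- real (card J) / 2)"
    have "(\<Sum>b\<in>B. p b * exp (Q b + g * (a * Z b j))) \<le> C * exp (\<theta> * g\<^sup>2 / 2)" for g
    proof -
      let ?s = "s(j := a * g)"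
      have lin: "(\<Sum>i\<in>T. ?s i * Z b i) = (\<Sum>i\<in>T. s i * Z b i) + g * (a * Z b j)" for b
        using sum_fun_upd[OF T j(1), of "\<lambda>i y. y * Z b i" s "a * g"] j(2) by simp
      have sq: "(\<Sum>i\<in>T. (?s i)\<^sup>2) = (\<Sum>i\<in>T. (s i)\<^sup>2) + (a * g)\<^sup>2"
        using sum_fun_upd[OF T j(1), of "\<lambda>i y. y\<^sup>2" s "a * g"] j(2) by simp
      have "(\<Sum>b\<in>B. p b * exp (Q b + g * (a * Z b j)))
          = (\<Sum>b\<in>B. p b * exp ((\<Sum>i\<in>T. ?s i * Z b i) + \<theta> / (2 * \<nu>\<^sup>2) * (\<Sum>i\<in>J. (Z b i)\<^sup>2)))"
        unfolding lin by (simp add: Q_def algebra_simps)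
      also have "\<dots> \<le> exp (\<nu>\<^sup>2 / 2 * (\<Sum>i\<in>T. (?s i)\<^sup>2)) * (1 - \<theta>) powr (- real (card J) / 2)"
        using insert by (intro insert.IH) auto
      also have "\<dots> = C * exp (\<theta> * g\<^sup>2 / 2)"
        unfolding sq distrib_left a(1) by (simp add: C_def exp_add)
      finally show ?thesis .
    qed
    then have "(\<Sum>b\<in>B. p b * exp (Q b + (a * Z b j)\<^sup>2 / 2)) \<le> C * (1 - \<theta>) powr (-1/2)"
      using C_def by (intro sum_exp_half_square_le_gaussian[OF p _ \<theta>]) auto
    moreover have "C * (1 - \<theta>) powr (-1/2)
        = exp (\<nu>\<^sup>2 / 2 * (\<Sum>i\<in>T. (s i)\<^sup>2)) * (1 - \<theta>) powr (- real (card (insert j J)) / 2)"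
    proof -
      have card: "- real (card (insert j J)) / 2 = - real (card J) / 2 + -1/2"
        using insert.hyps by (simp add: field_simps)
      show ?thesis unfolding C_def card powr_add by (simp only: mult.assoc)
    qed
    moreover have "Q b + (a * Z b j)\<^sup>2 / 2
        = (\<Sum>i\<in>T. s i * Z b i) + \<theta> / (2 * \<nu>\<^sup>2) * (\<Sum>i\<in>insert j J. (Z b i)\<^sup>2)" for b
      using insert.hyps a(2)[of "Z b j"] by (simp add: Q_def distrib_left)
    ultimately show ?case by simp
  qed
  from this[of T "\<lambda>_. 0"] show ?thesis by simp
qed

section \<open>Spectral theorem for symmetric real matrices\<close>

lemma inner_matrix_vector_symmetric:
  fixes K :: "real^'n^'n"
  assumes "transpose K = K"
  shows "x \<bullet> (K *v y) = (K *v x) \<bullet> y"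
proof -
  have "K *v x = x v* K" using assms transpose_matrix_vector[of K x] by simp
  then show ?thesis by (simp add: dot_lmul_matrix)
qed

lemma nonpos_if_linear_le_quadratic:
  fixes b c :: real
  assumes "\<And>t. 0 < t \<Longrightarrow> t * b \<le> t\<^sup>2 * c"
  shows "b \<le> 0"
proof (rule ccontr)
  assume "\<not> b \<le> 0"
  define t where "t = b / (\<bar>c\<bar> + 1)"
  have t: "0 < t" using \<open>\<not> b \<le> 0\<close> by (simp add: t_def add_pos_nonneg)
  then have "b \<le> t * c"
    using assms[OF t] by (simp add: power2_eq_square mult.assoc)
  also have "\<dots> \<le> t * \<bar>c\<bar>"
    using t by (intro mult_left_mono) auto
  also have "\<dots> < b"
    using \<open>\<not> b \<le> 0\<close> by (simp add: t_def field_simps)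
  finally show False by simp
qed

text \<open>The first-order condition at a maximiser \<open>x\<close> of the Rayleigh quotient, tested in
  the direction of the residual \<open>d = K x - (x\<^sup>T K x) x\<close>, forces \<open>d = 0\<close>.\<close>

lemma rayleigh_maximizer_eigenvector:
  fixes K :: "real^'n^'n"
  assumes symm: "transpose K = K" and S: "subspace S" and inv: "\<And>y. y \<in> S \<Longrightarrow> K *v y \<in> S"
    and x: "x \<in> S" "x \<bullet> x = 1"
    and max: "\<And>z. z \<in> S \<Longrightarrow> z \<bullet> (K *v z) \<le> (x \<bullet> (K *v x)) * (z \<bullet> z)"
  shows "K *v x = (x \<bullet> (K *v x)) *\<^sub>R x"
proof -
  define l where "l = x \<bullet> (K *v x)"
  define d where "d = K *v x - l *\<^sub>R x"
  have dS: "d \<in> S" using inv[OF x(1)] x(1) S by (simp add: d_def subspace_diff subspace_scale)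
  have xd: "x \<bullet> d = 0" using x(2) by (simp add: d_def inner_diff_right l_def)
  have dKx: "d \<bullet> (K *v x) = d \<bullet> d"
  proof -
    have "d \<bullet> (K *v x) = d \<bullet> (d + l *\<^sub>R x)" by (simp add: d_def)
    also have "\<dots> = d \<bullet> d" using xd by (simp add: inner_add_right inner_commute)
    finally show ?thesis .
  qed
  have xKd: "x \<bullet> (K *v d) = d \<bullet> d"
  proof -
    have "x \<bullet> (K *v d) = (K *v x) \<bullet> d"
      by (rule inner_matrix_vector_symmetric[OF symm])
    also have "\<dots> = d \<bullet> (K *v x)"
      by (rule inner_commute)
    finally show ?thesis by (simp only: dKx)
  qed
  have "t * (2 * (d \<bullet> d)) \<le> t\<^sup>2 * (l * (d \<bullet> d) - d \<bullet> (K *v d))" if "0 < t" for t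
  proof -
    have "x + t *\<^sub>R d \<in> S" using x(1) dS S by (simp add: subspace_add subspace_scale)
    then have le: "(x + t *\<^sub>R d) \<bullet> (K *v (x + t *\<^sub>R d)) \<le> l * ((x + t *\<^sub>R d) \<bullet> (x + t *\<^sub>R d))"
      unfolding l_def by (rule max)
    have quad: "(x + t *\<^sub>R d) \<bullet> (K *v (x + t *\<^sub>R d))
        = x \<bullet> (K *v x) + t * (x \<bullet> (K *v d)) + t * (d \<bullet> (K *v x)) + t\<^sup>2 * (d \<bullet> (K *v d))"
      by (simp add: matrix_vector_right_distrib matrix_vector_mult_scaleR inner_add_left
          inner_add_right power2_eq_square algebra_simps)
    have norm: "(x + t *\<^sub>R d) \<bullet> (x + t *\<^sub>R d) = 1 + t\<^sup>2 * (d \<bullet> d)"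
      using x(2) xd inner_commute[of d x] by (simp add: inner_add_left inner_add_right power2_eq_square)
    have "l + t * (d \<bullet> d) + t * (d \<bullet> d) + t\<^sup>2 * (d \<bullet> (K *v d)) \<le> l * (1 + t\<^sup>2 * (d \<bullet> d))"
      using le unfolding quad norm xKd dKx l_def[symmetric] .
    then show ?thesis by (simp add: algebra_simps)
  qed
  then have "2 * (d \<bullet> d) \<le> 0" by (rule nonpos_if_linear_le_quadratic)
  then have "d \<bullet> d = 0" using inner_ge_zero[of d] by linarith
  then have "d = 0" by simp
  then show ?thesis by (simp add: d_def l_def)
qed

lemma exists_unit_eigenvector_in_invariant_subspace:
  fixes K :: "real^'n^'n"
  assumes symm: "transpose K = K" and S: "subspace S" and inv: "\<And>y. y \<in> S \<Longrightarrow> K *v y \<in> S"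
    and x0: "x0 \<in> S" "x0 \<noteq> 0"
  obtains x where "x \<in> S" "norm x = 1" "K *v x = (x \<bullet> (K *v x)) *\<^sub>R x"
proof -
  let ?Q = "\<lambda>z. z \<bullet> (K *v z)"
  let ?U = "sphere 0 1 \<inter> S"
  have "compact ?U" using S by (intro compact_Int_closed compact_sphere closed_subspace)
  moreover have "x0 /\<^sub>R norm x0 \<in> ?U" using x0 S by (simp add: subspace_scale)
  moreover have "continuous_on ?U ?Q"
    by (intro continuous_intros linear_continuous_on linear_linear[THEN iffD1] matrix_vector_mul_linear)
  ultimately obtain x where xU: "x \<in> ?U" and xmax: "\<And>y. y \<in> ?U \<Longrightarrow> ?Q y \<le> ?Q x"
    using continuous_attains_sup[of ?U ?Q] by blast
  have scale: "?Q (a *\<^sub>R z) = a\<^sup>2 * ?Q z" for a z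
    by (simp add: matrix_vector_mult_scaleR power2_eq_square)
  have "?Q z \<le> ?Q x * (z \<bullet> z)" if "z \<in> S" for z
  proof (cases "z = 0")
    case False
    have "?Q (z /\<^sub>R norm z) \<le> ?Q x"
      using False \<open>z \<in> S\<close> S by (intro xmax) (simp add: subspace_scale)
    then have "(1 / norm z)\<^sup>2 * ?Q z \<le> ?Q x"
      by (simp only: scale) (simp add: inverse_eq_divide)
    then show ?thesis
      using False by (simp add: field_simps power_divide dot_square_norm)
  qed simp
  then have "K *v x = ?Q x *\<^sub>R x"
    using xU by (intro rayleigh_maximizer_eigenvector[OF symm S inv]) (auto simp: dot_square_norm)
  with xU show ?thesis by (intro that) auto
qed

lemma exists_orthonormal_eigenvectors:
  fixes K :: "real^'n^'n"
  assumes symm: "transpose K = K"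
  shows "k \<le> CARD('n) \<Longrightarrow> \<exists>B. finite B \<and> card B = k \<and> pairwise orthogonal B \<and>
    (\<forall>v\<in>B. norm v = 1 \<and> K *v v = (v \<bullet> (K *v v)) *\<^sub>R v)"
proof (induction k)
  case 0
  show ?case by (intro exI[of _ "{}"]) auto
next
  case (Suc k)
  then obtain B where B: "finite B" "card B = k" "pairwise orthogonal B"
    "\<forall>v\<in>B. norm v = 1 \<and> K *v v = (v \<bullet> (K *v v)) *\<^sub>R v" by auto
  define S where "S = {y. \<forall>x\<in>B. orthogonal x y}"
  have S: "subspace S" unfolding S_def by (rule subspace_orthogonal_to_vectors)
  have inv: "K *v y \<in> S" if "y \<in> S" for y
  proof -
    have "b \<bullet> (K *v y) = (b \<bullet> (K *v b)) * (b \<bullet> y)" if "b \<in> B" for b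
      using B(4) that by (metis inner_matrix_vector_symmetric[OF symm] inner_scaleR_left)
    then show ?thesis using \<open>y \<in> S\<close> by (auto simp: S_def orthogonal_def)
  qed
  have "dim B < DIM(real^'n)"
    using dim_le_card'[OF B(1)] B(2) Suc.prems by simp
  then obtain x0 where x0: "x0 \<noteq> 0" "\<And>y. y \<in> span B \<Longrightarrow> orthogonal x0 y"
    using orthogonal_to_subspace_exists by blast
  have "x0 \<in> S" using x0(2) span_base by (auto simp: S_def orthogonal_commute)
  then obtain v where v: "v \<in> S" "norm v = 1" "K *v v = (v \<bullet> (K *v v)) *\<^sub>R v"
    using exists_unit_eigenvector_in_invariant_subspace[OF symm S inv _ x0(1)] by blast
  have "v \<notin> B"
  proof
    assume "v \<in> B"
    then have "v \<bullet> v = 0" using v(1) by (auto simp: S_def orthogonal_def)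
    then show False using v(2) by simp
  qed
  then show ?case
    using B v by (intro exI[of _ "insert v B"])
      (auto simp: S_def pairwise_insert orthogonal_commute)
qed

lemma exists_orthonormal_eigenbasis:
  fixes K :: "real^'n^'n"
  assumes symm: "transpose K = K"
  obtains v :: "'n \<Rightarrow> real^'n" and \<mu> where
    "\<And>i j. v i \<bullet> v j = (if i = j then 1 else 0)" "\<And>i. K *v v i = \<mu> i *\<^sub>R v i"
proof -
  obtain B where B: "finite B" "card B = CARD('n)" "pairwise orthogonal B"
    "\<forall>v\<in>B. norm v = 1 \<and> K *v v = (v \<bullet> (K *v v)) *\<^sub>R v"
    using exists_orthonormal_eigenvectors[OF symm, of "CARD('n)"] by auto
  obtain v where v: "bij_betw v (UNIV::'n set) B"
    using finite_same_card_bij[of "UNIV::'n set" B] B by auto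
  have "v i \<bullet> v j = (if i = j then 1 else 0)" for i j
  proof (cases "i = j")
    case True
    then show ?thesis using v B(4) by (auto simp: bij_betw_def dot_square_norm)
  next
    case False
    then have "v i \<noteq> v j" using v by (auto simp: bij_betw_def inj_on_def)
    then show ?thesis using v B(3) False by (auto simp: bij_betw_def pairwise_def orthogonal_def)
  qed
  moreover have "K *v v i = (v i \<bullet> (K *v v i)) *\<^sub>R v i" for i
    using v B(4) by (auto simp: bij_betw_def)
  ultimately show ?thesis by (rule that)
qed

definition diag_matrix :: "('n \<Rightarrow> real) \<Rightarrow> real^'n^'n" where
  "diag_matrix f = (\<chi> i j. if i = j then f i else 0)"

lemma eigenvectors_diagonalize:
  fixes A :: "real^'n^'n" and v :: "'n \<Rightarrow> real^'n"
  defines "V \<equiv> \<chi> a i. v i $ a"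
  assumes VVt: "V ** transpose V = mat 1" and ev: "\<And>i. A *v v i = f i *\<^sub>R v i"
  shows "A = V ** diag_matrix f ** transpose V"
proof -
  have "(A ** V) $ a $ i = (V ** diag_matrix f) $ a $ i" for a i
  proof -
    have "(A ** V) $ a $ i = (A *v v i) $ a"
      by (simp add: matrix_matrix_mult_def matrix_vector_mult_def V_def)
    also have "\<dots> = (V ** diag_matrix f) $ a $ i"
      by (simp add: ev matrix_matrix_mult_def diag_matrix_def V_def if_distrib[of "\<lambda>x. _ * x"] cong: if_cong)
    finally show ?thesis .
  qed
  then have "A ** V = V ** diag_matrix f" by (simp add: vec_eq_iff)
  then show ?thesis
    using VVt by (metis matrix_mul_assoc matrix_mul_rid)
qed

lemma quadratic_form_eigen_coordinates:
  fixes A :: "real^'n^'n" and v :: "'n \<Rightarrow> real^'n"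
  defines "V \<equiv> \<chi> a i. v i $ a"
  assumes VVt: "V ** transpose V = mat 1" and ev: "\<And>i. A *v v i = f i *\<^sub>R v i"
  shows "w \<bullet> (A *v w) = (\<Sum>i\<in>UNIV. f i * (v i \<bullet> w)\<^sup>2)"
proof -
  define c where "c = transpose V *v w"
  have c: "c $ i = v i \<bullet> w" for i
    by (simp add: c_def matrix_vector_mult_def transpose_def V_def inner_vec_def)
  have "A *v w = V *v (diag_matrix f *v c)"
    unfolding c_def
    by (subst eigenvectors_diagonalize[OF VVt[unfolded V_def] ev, folded V_def])
      (simp only: matrix_vector_mul_assoc matrix_mul_assoc)
  then have "w \<bullet> (A *v w) = c \<bullet> (diag_matrix f *v c)"
    by (simp add: c_def dot_lmul_matrix[symmetric])
  also have "\<dots> = (\<Sum>i\<in>UNIV. f i * (c $ i)\<^sup>2)"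
    by (simp add: inner_vec_def matrix_vector_mult_def diag_matrix_def power2_eq_square
        if_distrib[of "\<lambda>x. x * _"] cong: if_cong) (simp add: algebra_simps)
  finally show ?thesis by (simp add: c)
qed

lemma det_eigen_coordinates:
  fixes A :: "real^'n^'n" and v :: "'n \<Rightarrow> real^'n"
  defines "V \<equiv> \<chi> a i. v i $ a"
  assumes VVt: "V ** transpose V = mat 1" and ev: "\<And>i. A *v v i = f i *\<^sub>R v i"
  shows "det A = (\<Prod>i\<in>UNIV. f i)"
proof -
  have "det A = det (diag_matrix f) * (det V * det (transpose V))"
    by (subst eigenvectors_diagonalize[OF VVt[unfolded V_def] ev]) (simp add: V_def det_mul)
  also have "det V * det (transpose V) = 1"
    using VVt by (metis det_mul det_I)
  finally show ?thesis
    by (simp add: det_diagonal diag_matrix_def)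
qed

lemma poly_det: "poly (det A) x = det (\<chi> i j. poly (A $ i $ j) x)"
  unfolding det_def by (simp add: poly_sum poly_prod)

theorem symmetric_matrix_spectral:
  fixes K :: "real^'n^'n"
  assumes symm: "transpose K = K"
  obtains v :: "'n \<Rightarrow> real^'n" and \<mu> :: "'n \<Rightarrow> real" where
    "\<And>i j. v i \<bullet> v j = (if i = j then 1 else 0)"
    "\<And>i. K *v v i = \<mu> i *\<^sub>R v i"
    "\<And>w. w \<bullet> (K *v w) = (\<Sum>i\<in>UNIV. \<mu> i * (v i \<bullet> w)\<^sup>2)"
    "\<And>w. w \<bullet> w = (\<Sum>i\<in>UNIV. (v i \<bullet> w)\<^sup>2)"
    "charpoly K = (\<Prod>i\<in>UNIV. [:- \<mu> i, 1:])"
proof -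
  obtain v :: "'n \<Rightarrow> real^'n" and \<mu> where
    on: "\<And>i j. v i \<bullet> v j = (if i = j then 1 else 0)" and ev: "\<And>i. K *v v i = \<mu> i *\<^sub>R v i"
    using exists_orthonormal_eigenbasis[OF symm] by blast
  define V where "V = (\<chi> a i. v i $ a :: real^'n^'n)"
  have "transpose V ** V = mat 1"
    using on by (simp add: vec_eq_iff matrix_matrix_mult_def transpose_def mat_def inner_vec_def V_def)
  then have VVt: "V ** transpose V = mat 1" by (simp add: matrix_left_right_inverse)
  have "mat x *v y = x *\<^sub>R y" for x and y :: "real^'n"
    by (simp add: vec_eq_iff matrix_vector_mult_def mat_def if_distrib[of "\<lambda>z. z * _"] cong: if_cong)
  then have mat_ev: "(mat x - K) *v v i = (x - \<mu> i) *\<^sub>R v i" for x i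
    by (simp add: matrix_vector_mult_diff_rdistrib ev scaleR_diff_left)
  have "poly (charpoly K) x = poly (\<Prod>i\<in>UNIV. [:- \<mu> i, 1:]) x" for x
  proof -
    have "poly (charpoly K) x = det (mat x - K)"
      unfolding charpoly_def poly_det by (rule arg_cong[where f=det]) (simp add: vec_eq_iff mat_def)
    also have "\<dots> = (\<Prod>i\<in>UNIV. x - \<mu> i)"
      by (rule det_eigen_coordinates[OF VVt[unfolded V_def] mat_ev])
    finally show ?thesis by (simp add: poly_prod)
  qed
  then have "charpoly K = (\<Prod>i\<in>UNIV. [:- \<mu> i, 1:])"
    by (intro poly_eq_poly_eq_iff[THEN iffD1] ext)
  moreover note quadratic_form_eigen_coordinates[OF VVt[unfolded V_def] ev]
  moreover have "w \<bullet> w = (\<Sum>i\<in>UNIV. (v i \<bullet> w)\<^sup>2)" for w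
    using quadratic_form_eigen_coordinates[OF VVt[unfolded V_def], of "mat 1" "\<lambda>_. 1" w] by simp
  ultimately show ?thesis using that on ev by blast
qed

lemma length_filter_greater_nth_le:
  fixes xs :: "'a::linorder list"
  assumes "sorted (rev xs)" "r < length xs"
  shows "length (filter (\<lambda>y. xs ! r < y) xs) \<le> r"
proof -
  have "filter (\<lambda>y. xs ! r < y) (drop r xs) = []"
    using sorted_rev_nth_mono[OF assms(1)]
    by (auto simp: filter_empty_conv in_set_conv_nth not_less)
  then have "filter (\<lambda>y. xs ! r < y) xs = filter (\<lambda>y. xs ! r < y) (take r xs)"
    by (metis append_Nil2 append_take_drop_id filter_append)
  then show ?thesis
    using length_filter_le[of _ "take r xs"] by simp
qed

lemma eig_mem_proots: "eig K j \<in> insert 0 (set_mset (proots (charpoly K)))"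
proof -
  let ?ev = "rev (sorted_list_of_multiset (proots (charpoly K)))"
  have "?ev ! (j - 1) \<in> set ?ev" if "1 \<le> j" "j \<le> length ?ev"
    using that by (intro nth_mem) auto
  then show ?thesis by (auto simp: eig_def Let_def)
qed

lemma size_proots_greater_eig_le:
  "size (filter_mset (\<lambda>y. eig K (r + 1) < y) (proots (charpoly K))) \<le> r"
proof -
  define ev where "ev = rev (sorted_list_of_multiset (proots (charpoly K)))"
  have size: "size (filter_mset P (proots (charpoly K))) = length (filter P ev)" for P
    by (metis ev_def mset_filter mset_rev mset_sorted_list_of_multiset size_mset)
  show ?thesis
  proof (cases "r < length ev")
    case True
    then have "eig K (r + 1) = ev ! r" by (simp add: eig_def ev_def)
    then show ?thesis
      using length_filter_greater_nth_le[OF _ True] by (simp add: size ev_def)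
  next
    case False
    have "size (filter_mset (\<lambda>y. eig K (r + 1) < y) (proots (charpoly K)))
        = length (filter (\<lambda>y. eig K (r + 1) < y) ev)"
      by (rule size)
    also have "\<dots> \<le> length ev" by (rule length_filter_le)
    also have "\<dots> \<le> r" using False by simp
    finally show ?thesis .
  qed
qed

lemma eig_charpoly_prod:
  fixes K :: "real^'n^'n" and \<mu> :: "'n \<Rightarrow> real"
  assumes "charpoly K = (\<Prod>i\<in>UNIV. [:- \<mu> i, 1:])"
  shows "eig K j \<in> insert 0 (range \<mu>)" and "card {i. eig K (r + 1) < \<mu> i} \<le> r"
proof -
  have "proots (charpoly K) = image_mset \<mu> (mset_set UNIV)"
    unfolding assms by (subst proots_prod) (auto simp: sum_unfold_sum_mset multiset.map_comp o_def)
  then show "eig K j \<in> insert 0 (range \<mu>)" and "card {i. eig K (r + 1) < \<mu> i} \<le> r"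
    using eig_mem_proots[of K j] size_proots_greater_eig_le[of K r]
    by (simp_all add: image_mset_filter_mset_swap[symmetric] filter_mset_mset_set)
qed

lemma nn_integral_finite_range_indicator:
  fixes X :: "'a \<Rightarrow> 'b::finite" and f :: "'b \<Rightarrow> real"
  assumes M: "finite_measure M" and X: "X \<in> M \<rightarrow>\<^sub>M count_space UNIV" and E: "E \<in> sets M"
    and f: "\<And>y. 0 \<le> f y"
  shows "(\<integral>\<^sup>+\<omega>. ennreal (f (X \<omega>) * indicator E \<omega>) \<partial>M)
    = ennreal (\<Sum>y\<in>UNIV. measure M (E \<inter> X -` {y} \<inter> space M) * f y)"
proof -
  interpret finite_measure M by (rule M)
  have sets: "E \<inter> X -` {y} \<inter> space M \<in> sets M" for y
    using measurable_sets[OF X, of "{y}"] E by (simp add: Int_assoc)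
  have "(\<integral>\<^sup>+\<omega>. ennreal (f (X \<omega>) * indicator E \<omega>) \<partial>M)
      = (\<integral>\<^sup>+\<omega>. (\<Sum>y\<in>UNIV. ennreal (f y) * indicator (E \<inter> X -` {y} \<inter> space M) \<omega>) \<partial>M)"
  proof (rule nn_integral_cong)
    fix \<omega> assume "\<omega> \<in> space M"
    then have "(\<Sum>y\<in>UNIV. ennreal (f y) * indicator (E \<inter> X -` {y} \<inter> space M) \<omega>)
        = (\<Sum>y\<in>UNIV. if y = X \<omega> then ennreal (f y) * indicator E \<omega> else 0)"
      by (intro sum.cong) (auto simp: indicator_def)
    then show "ennreal (f (X \<omega>) * indicator E \<omega>)
        = (\<Sum>y\<in>UNIV. ennreal (f y) * indicator (E \<inter> X -` {y} \<inter> space M) \<omega>)"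
      by (simp add: indicator_def)
  qed
  also have "\<dots> = (\<Sum>y\<in>UNIV. ennreal (f y) * emeasure M (E \<inter> X -` {y} \<inter> space M))"
    using sets by (subst nn_integral_sum) (auto simp: nn_integral_cmult_indicator)
  also have "\<dots> = ennreal (\<Sum>y\<in>UNIV. measure M (E \<inter> X -` {y} \<inter> space M) * f y)"
    using f by (simp add: emeasure_eq_measure ennreal_mult[symmetric] sum_ennreal mult.commute)
  finally show ?thesis .
qed

lemma sub_gaussian_event_sum:
  assumes M: "finite_measure M" and Xout: "Xout \<in> M \<rightarrow>\<^sub>M count_space UNIV"
    and subg: "sub_gaussian_event M Xin Xout K \<nu> \<delta> E"
  shows "(\<Sum>S\<in>UNIV. measure M (E \<inter> Xout -` {S} \<inter> space M) * exp (u \<bullet> (K *v (emp Xin - emp S))))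
    \<le> exp (\<nu>\<^sup>2 / 2 * (u \<bullet> (K *v u)))"
proof -
  have E: "E \<in> sets M"
    and mgf: "(\<integral>\<^sup>+\<omega>. ennreal (exp (u \<bullet> (K *v (emp Xin - emp (Xout \<omega>)))) * indicator E \<omega>) \<partial>M)
      \<le> ennreal (exp (\<nu>\<^sup>2 / 2 * (u \<bullet> (K *v u))))"
    using subg by (auto simp: sub_gaussian_event_def)
  have "ennreal (\<Sum>S\<in>UNIV. measure M (E \<inter> Xout -` {S} \<inter> space M) * exp (u \<bullet> (K *v (emp Xin - emp S))))
      = (\<integral>\<^sup>+\<omega>. ennreal (exp (u \<bullet> (K *v (emp Xin - emp (Xout \<omega>)))) * indicator E \<omega>) \<partial>M)"
    by (rule nn_integral_finite_range_indicator[OF M Xout E, symmetric]) simp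
  with mgf have "ennreal (\<Sum>S\<in>UNIV. measure M (E \<inter> Xout -` {S} \<inter> space M) * exp (u \<bullet> (K *v (emp Xin - emp S))))
      \<le> ennreal (exp (\<nu>\<^sup>2 / 2 * (u \<bullet> (K *v u))))"
    by simp
  then show ?thesis by (subst (asm) ennreal_le_iff) auto
qed

lemma measure_preimage_le_exp_sum:
  fixes X :: "'a \<Rightarrow> 'b::finite"
  assumes M: "finite_measure M" and X: "X \<in> M \<rightarrow>\<^sub>M count_space UNIV" and E: "E \<in> sets M"
    and large: "\<And>y. y \<in> A \<Longrightarrow> L \<le> Y y"
  shows "measure M (E \<inter> {\<omega> \<in> space M. X \<omega> \<in> A})
    \<le> exp (- L) * (\<Sum>y\<in>UNIV. measure M (E \<inter> X -` {y} \<inter> space M) * exp (Y y))"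
proof -
  interpret finite_measure M by (rule M)
  let ?p = "\<lambda>y. measure M (E \<inter> X -` {y} \<inter> space M)"
  have sets: "E \<inter> X -` {y} \<inter> space M \<in> sets M" for y
    using measurable_sets[OF X, of "{y}"] E by (simp add: Int_assoc)
  have "measure M (E \<inter> {\<omega> \<in> space M. X \<omega> \<in> A})
      = measure M (\<Union>y\<in>A. E \<inter> X -` {y} \<inter> space M)"
    by (rule arg_cong[where f = "measure M"]) auto
  also have "\<dots> \<le> (\<Sum>y\<in>A. ?p y)"
    using sets by (intro measure_subadditive_finite) auto
  also have "\<dots> \<le> (\<Sum>y\<in>A. exp (- L) * (?p y * exp (Y y)))"
  proof (intro sum_mono)
    fix y assume "y \<in> A"
    then have "?p y * 1 \<le> ?p y * exp (Y y - L)"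
      using large by (intro mult_left_mono) auto
    then show "?p y \<le> exp (- L) * (?p y * exp (Y y))"
      by (simp add: exp_diff exp_minus field_simps)
  qed
  also have "\<dots> \<le> (\<Sum>y\<in>UNIV. exp (- L) * (?p y * exp (Y y)))"
    by (intro sum_mono2) auto
  finally show ?thesis by (simp add: sum_distrib_left)
qed

section \<open>Sub-Gaussian tail of the MMD\<close>

lemma inner_self_emp_diff:
  fixes A S :: "'n::finite set"
  assumes SA: "S \<subseteq> A" and S0: "0 < card S"
  shows "(emp A - emp S) \<bullet> (emp A - emp S) = 1 / real (card S) - 1 / real (card A)"
proof -
  define a where "a = real (card A)"
  define b where "b = real (card S)"
  have le: "card S \<le> card A" using SA by (simp add: card_mono)
  have b0: "b > 0" using S0 by (simp add: b_def)
  have a0: "a > 0" using le S0 by (simp add: a_def)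
  let ?g = "\<lambda>i. ((if i \<in> A then 1 else 0) / a - (if i \<in> S then 1 else 0) / b)\<^sup>2"
  have "(emp A - emp S) \<bullet> (emp A - emp S) = (\<Sum>i\<in>UNIV. ?g i)"
    by (simp add: inner_vec_def emp_def a_def b_def power2_eq_square)
  also have "\<dots> = (\<Sum>i\<in>A. ?g i)"
    using SA by (intro sum.mono_neutral_right) auto
  also have "\<dots> = (\<Sum>i\<in>A - S. ?g i) + (\<Sum>i\<in>S. ?g i)"
    by (rule sum.subset_diff[OF SA]) simp
  also have "(\<Sum>i\<in>A - S. ?g i) = (a - b) * (1/a)\<^sup>2"
  proof -
    have "(\<Sum>i\<in>A - S. ?g i) = (\<Sum>i\<in>A - S. (1/a)\<^sup>2)" by (intro sum.cong) auto
    also have "\<dots> = real (card (A - S)) * (1/a)\<^sup>2" by simp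
    also have "real (card (A - S)) = a - b"
      using SA le by (simp add: card_Diff_subset a_def b_def of_nat_diff)
    finally show ?thesis .
  qed
  also have "(\<Sum>i\<in>S. ?g i) = b * (1/a - 1/b)\<^sup>2"
    using SA by (subst sum.cong[of S S _ "\<lambda>_. (1/a - 1/b)\<^sup>2"]) (auto simp: b_def)
  also have "(a - b) * (1/a)\<^sup>2 + b * (1/a - 1/b)\<^sup>2 = 1/b - 1/a"
    using a0 b0 by (simp add: field_simps power2_eq_square)
  finally show ?thesis by (simp add: a_def b_def)
qed

lemma sqrt_weighted_sum_sq_le_head_tail:
  fixes \<mu> x :: "'i \<Rightarrow> real"
  assumes I: "finite I" and \<mu>: "\<And>i. i \<in> I \<Longrightarrow> 0 \<le> \<mu> i" and c: "0 \<le> c"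
  shows "sqrt (\<Sum>i\<in>I. \<mu> i * (x i)\<^sup>2)
    \<le> sqrt (\<Sum>i\<in>{i\<in>I. c < \<mu> i}. \<mu> i * (x i)\<^sup>2) + sqrt (c * (\<Sum>i\<in>I. (x i)\<^sup>2))"
proof -
  let ?H = "{i\<in>I. c < \<mu> i}"
  let ?head = "\<Sum>i\<in>?H. \<mu> i * (x i)\<^sup>2"
  let ?tail = "\<Sum>i\<in>I - ?H. \<mu> i * (x i)\<^sup>2"
  have split: "(\<Sum>i\<in>I. \<mu> i * (x i)\<^sup>2) = ?head + ?tail"
    using I by (subst sum.subset_diff[of ?H I]) auto
  have tail: "?tail \<le> c * (\<Sum>i\<in>I. (x i)\<^sup>2)"
  proof -
    have "?tail \<le> (\<Sum>i\<in>I - ?H. c * (x i)\<^sup>2)"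
      by (intro sum_mono mult_right_mono) auto
    also have "\<dots> \<le> (\<Sum>i\<in>I. c * (x i)\<^sup>2)"
      using I c by (intro sum_mono2) auto
    finally show ?thesis by (simp add: sum_distrib_left)
  qed
  have "0 \<le> ?head" "0 \<le> ?tail"
    using \<mu> c by (auto intro!: sum_nonneg)
  then have "sqrt (?head + ?tail) \<le> sqrt ?head + sqrt ?tail"
    by (rule sqrt_add_le_add_sqrt)
  also have "\<dots> \<le> sqrt ?head + sqrt (c * (\<Sum>i\<in>I. (x i)\<^sup>2))"
    using tail by simp
  finally show ?thesis unfolding split .
qed

lemma exists_whitening_vector:
  fixes K :: "real^'n^'n" and v :: "'n \<Rightarrow> real^'n"
  assumes symm: "transpose K = K" and on: "\<And>i j. v i \<bullet> v j = (if i = j then 1 else 0)"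
    and ev: "\<And>i. K *v v i = \<mu> i *\<^sub>R v i" and pos: "\<And>i. i \<in> T \<Longrightarrow> 0 < \<mu> i"
  obtains u where "u \<bullet> (K *v u) = (\<Sum>i\<in>T. (s i)\<^sup>2)"
    and "\<And>w. u \<bullet> (K *v w) = (\<Sum>i\<in>T. s i * (sqrt (\<mu> i) * (v i \<bullet> w)))"
proof -
  define u where "u = (\<Sum>i\<in>T. (s i / sqrt (\<mu> i)) *\<^sub>R v i)"
  have "K *v u = (\<Sum>i\<in>T. (s i / sqrt (\<mu> i) * \<mu> i) *\<^sub>R v i)"
    by (simp add: u_def vec.sum matrix_vector_mult_scaleR ev)
  also have "\<dots> = (\<Sum>i\<in>T. (s i * sqrt (\<mu> i)) *\<^sub>R v i)"
    using pos by (intro sum.cong refl) (simp add: less_imp_le real_div_sqrt flip: times_divide_eq_right)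
  finally have uKw: "u \<bullet> (K *v w) = (\<Sum>i\<in>T. s i * (sqrt (\<mu> i) * (v i \<bullet> w)))" for w
    using inner_matrix_vector_symmetric[OF symm, of u w] by (simp add: inner_sum_left mult.assoc)
  have vu: "v i \<bullet> u = s i / sqrt (\<mu> i)" if "i \<in> T" for i
    using that by (simp add: u_def inner_sum_right on if_distrib[of "\<lambda>x. _ * x"] cong: if_cong)
  have "s i * (sqrt (\<mu> i) * (v i \<bullet> u)) = (s i)\<^sup>2" if "i \<in> T" for i
    using pos[OF that] vu[OF that] by (simp add: power2_eq_square)
  then have "u \<bullet> (K *v u) = (\<Sum>i\<in>T. (s i)\<^sup>2)"
    unfolding uKw by (rule sum.cong[OF refl])
  then show ?thesis using uKw by (rule that)
qed

lemma sum_le_of_sum_sqrt_le: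
  fixes a b c A :: real
  assumes "0 \<le> a" "0 \<le> b" "0 \<le> c" "sqrt a + sqrt b + sqrt c \<le> sqrt A"
  shows "a + b + c \<le> A"
proof -
  have "a + b + c \<le> (sqrt a + sqrt b + sqrt c)\<^sup>2"
    using assms by (simp add: power2_eq_square algebra_simps)
  also have "\<dots> \<le> (sqrt A)\<^sup>2"
    using assms by (intro power_mono) auto
  also have "\<dots> = A"
    using assms by (smt (verit) real_sqrt_ge_zero real_sqrt_lt_0_iff real_sqrt_pow2)
  finally show ?thesis .
qed

lemma powr_one_minus_two_div_e_le:
  assumes "0 \<le> x"
  shows "(1 - 2 / exp (1::real)) powr (- x / 2) \<le> exp (exp 1 * x)"
proof -
  have e: "5/2 \<le> exp (1::real)" using exp_lower_Taylor_quadratic[of 1] by simp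
  have "1 / (1 - 2 / exp (1::real)) \<le> exp (2 * exp 1)"
  proof -
    have "1 / (1 - 2 / exp 1) \<le> (5::real)" using e by (simp add: field_simps)
    also have "\<dots> \<le> 1 + 2 * exp 1" using e by simp
    also have "\<dots> \<le> exp (2 * exp 1)" by (rule exp_ge_add_one_self)
    finally show ?thesis .
  qed
  then have "(1 / (1 - 2 / exp (1::real))) powr (x / 2) \<le> exp (2 * exp 1) powr (x / 2)"
    using e assms by (intro powr_mono2) (auto simp: field_simps)
  then show ?thesis
    using e by (simp add: powr_minus_divide powr_def field_simps ln_div)
qed

lemma MMD_le_head_add_tail:
  fixes K :: "real^'n^'n" and v :: "'n \<Rightarrow> real^'n" and A S :: "'n::finite set"
  assumes quad: "\<And>w. w \<bullet> (K *v w) = (\<Sum>i\<in>UNIV. \<mu> i * (v i \<bullet> w)\<^sup>2)"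
    and nrm: "\<And>w. w \<bullet> w = (\<Sum>i\<in>UNIV. (v i \<bullet> w)\<^sup>2)"
    and \<mu>: "\<And>i. 0 \<le> \<mu> i" and c: "0 \<le> c" and SA: "S \<subseteq> A" and S: "0 < card S"
  shows "MMD K (emp A) (emp S) \<le> sqrt (\<Sum>i\<in>{i. c < \<mu> i}. \<mu> i * (v i \<bullet> (emp A - emp S))\<^sup>2)
    + sqrt (c * (1 / real (card S) - 1 / real (card A)))"
  using sqrt_weighted_sum_sq_le_head_tail[of UNIV \<mu> c "\<lambda>i. v i \<bullet> (emp A - emp S)"] \<mu> c
    inner_self_emp_diff[OF SA S]
  by (simp add: MMD_def quad nrm[symmetric])

lemma sub_gaussian_event_exp_head_le:
  fixes K :: "real^'n^'n" and v :: "'n \<Rightarrow> real^'n"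
  assumes M: "finite_measure M" and Xout: "Xout \<in> M \<rightarrow>\<^sub>M count_space UNIV"
    and subg: "sub_gaussian_event M Xin Xout K \<nu> \<delta> E"
    and on: "\<And>i j. v i \<bullet> v j = (if i = j then 1 else 0)" and ev: "\<And>i. K *v v i = \<mu> i *\<^sub>R v i"
    and pos: "\<And>i. i \<in> T \<Longrightarrow> 0 < \<mu> i"
  shows "(\<Sum>S\<in>UNIV. measure M (E \<inter> Xout -` {S} \<inter> space M)
      * exp ((\<Sum>i\<in>T. \<mu> i * (v i \<bullet> (emp Xin - emp S))\<^sup>2) / (exp 1 * \<nu>\<^sup>2)))
    \<le> exp (exp 1 * real (card T))"
proof -
  have symm: "transpose K = K" and \<nu>: "0 < \<nu>"
    using subg by (auto simp: sub_gaussian_event_def SPSD_def)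
  have e: "2 < exp (1::real)" using exp_lower_Taylor_quadratic[of 1] by simp
  define Z where "Z S i = sqrt (\<mu> i) * (v i \<bullet> (emp Xin - emp S))" for S i
  define p where "p S = measure M (E \<inter> Xout -` {S} \<inter> space M)" for S
  have subgZ: "(\<Sum>S\<in>UNIV. p S * exp (\<Sum>i\<in>T. s i * Z S i)) \<le> exp (\<nu>\<^sup>2 / 2 * (\<Sum>i\<in>T. (s i)\<^sup>2))"
    for s
  proof -
    obtain u where "u \<bullet> (K *v u) = (\<Sum>i\<in>T. (s i)\<^sup>2)"
      "\<And>w. u \<bullet> (K *v w) = (\<Sum>i\<in>T. s i * (sqrt (\<mu> i) * (v i \<bullet> w)))"
      using exists_whitening_vector[OF symm on ev pos] by blast
    then show ?thesis
      using sub_gaussian_event_sum[OF M Xout subg, of u] by (simp add: p_def Z_def)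
  qed
  have "(\<Sum>S\<in>UNIV. p S * exp (2 / exp 1 / (2 * \<nu>\<^sup>2) * (\<Sum>i\<in>T. (Z S i)\<^sup>2)))
      \<le> (1 - 2 / exp 1) powr (- real (card T) / 2)"
    using e \<nu> by (intro subgaussian_sum_exp_norm_sq_le subgZ) (auto simp: p_def)
  also have "\<dots> \<le> exp (exp 1 * real (card T))"
    by (rule powr_one_minus_two_div_e_le) simp
  finally have bound: "(\<Sum>S\<in>UNIV. p S * exp (2 / exp 1 / (2 * \<nu>\<^sup>2) * (\<Sum>i\<in>T. (Z S i)\<^sup>2)))
      \<le> exp (exp 1 * real (card T))" .
  have scale: "2 / exp 1 / (2 * \<nu>\<^sup>2) * x = x / (exp 1 * \<nu>\<^sup>2)" for x :: real
    by simp
  have Z_sq: "(\<Sum>i\<in>T. (Z S i)\<^sup>2) = (\<Sum>i\<in>T. \<mu> i * (v i \<bullet> (emp Xin - emp S))\<^sup>2)" for S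
    using pos by (intro sum.cong refl) (simp add: Z_def power_mult_distrib less_imp_le)
  from bound show ?thesis
    unfolding scale Z_sq p_def .
qed

lemma chernoff_exponent_le:
  fixes \<nu> t h :: real and r :: nat
  assumes \<nu>: "0 < \<nu>" and t: "0 \<le> t"
    and le: "\<nu> * sqrt (exp 1) + \<nu> * sqrt ((exp 1)\<^sup>2 * real r) + \<nu> * sqrt (exp 1) * sqrt t \<le> sqrt h"
  shows "1 + exp 1 * real r + t \<le> h / (exp 1 * \<nu>\<^sup>2)"
proof -
  have "sqrt (\<nu>\<^sup>2 * exp 1) + sqrt (\<nu>\<^sup>2 * ((exp 1)\<^sup>2 * real r)) + sqrt (\<nu>\<^sup>2 * exp 1 * t) \<le> sqrt h"
    using le \<nu> by (simp add: real_sqrt_mult)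
  then have "\<nu>\<^sup>2 * exp 1 + \<nu>\<^sup>2 * ((exp 1)\<^sup>2 * real r) + \<nu>\<^sup>2 * exp 1 * t \<le> h"
    by (rule sum_le_of_sum_sqrt_le[rotated 3]) (use t in simp_all)
  also have "\<nu>\<^sup>2 * exp 1 + \<nu>\<^sup>2 * ((exp 1)\<^sup>2 * real r) + \<nu>\<^sup>2 * exp 1 * t
      = (1 + exp 1 * real r + t) * (exp 1 * \<nu>\<^sup>2)"
    by (simp add: algebra_simps power2_eq_square)
  finally show ?thesis
    using \<nu> by (simp add: pos_le_divide_eq)
qed

lemma mmd_tail_bound_rank:
  fixes M :: "'a measure" and K :: "real^'n^'n" and Xin :: "'n::finite set"
    and Xout :: "'a \<Rightarrow> 'n set" and r :: nat and t :: real
  assumes M: "prob_space M" and Xout: "Xout \<in> M \<rightarrow>\<^sub>M count_space UNIV"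
    and out: "\<And>\<omega>. \<omega> \<in> space M \<Longrightarrow> Xout \<omega> \<subseteq> Xin \<and> card (Xout \<omega>) = nout"
    and nout: "0 < nout" and nin: "card Xin = nin"
    and subg: "sub_gaussian_event M Xin Xout K \<nu> \<delta> E" and t: "0 \<le> t"
  shows "measure M (E \<inter> {\<omega> \<in> space M. \<nu> * sqrt (exp 1)
      + (\<nu> * sqrt ((exp 1)\<^sup>2 * real r) + sqrt (eig K (r + 1) * (1 / real nout - 1 / real nin)))
      + \<nu> * sqrt (exp 1) * sqrt t \<le> MMD K (emp Xin) (emp (Xout \<omega>))}) \<le> exp (- t)"
proof -
  interpret prob_space M by (rule M)
  have symm: "transpose K = K" and psd: "\<And>u. 0 \<le> u \<bullet> (K *v u)" and \<nu>: "0 < \<nu>"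
    and E: "E \<in> sets M"
    using subg by (auto simp: sub_gaussian_event_def SPSD_def)
  obtain v :: "'n \<Rightarrow> real^'n" and \<mu> where
    on: "\<And>i j. v i \<bullet> v j = (if i = j then 1 else 0)" and ev: "\<And>i. K *v v i = \<mu> i *\<^sub>R v i" and
    quad: "\<And>w. w \<bullet> (K *v w) = (\<Sum>i\<in>UNIV. \<mu> i * (v i \<bullet> w)\<^sup>2)" and
    nrm: "\<And>w. w \<bullet> w = (\<Sum>i\<in>UNIV. (v i \<bullet> w)\<^sup>2)" and
    cp: "charpoly K = (\<Prod>i\<in>UNIV. [:- \<mu> i, 1:])"
    using symmetric_matrix_spectral[OF symm] by blast
  have \<mu>: "0 \<le> \<mu> i" for i
    using psd[of "v i"] by (simp add: ev on)
  define c where "c = eig K (r + 1)"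
  define T where "T = {i. c < \<mu> i}"
  have c: "0 \<le> c" using eig_charpoly_prod(1)[OF cp, of "r + 1"] \<mu> by (auto simp: c_def)
  have T: "\<And>i. i \<in> T \<Longrightarrow> 0 < \<mu> i" using c by (auto simp: T_def)
  have "card T \<le> r" using eig_charpoly_prod(2)[OF cp, of r] by (simp add: T_def c_def)
  define head where "head S = (\<Sum>i\<in>T. \<mu> i * (v i \<bullet> (emp Xin - emp S))\<^sup>2)" for S
  define p where "p S = measure M (E \<inter> Xout -` {S} \<inter> space M)" for S
  define L where "L = 1 + exp 1 * real r + t"
  define thr where "thr = \<nu> * sqrt (exp 1)
    + (\<nu> * sqrt ((exp 1)\<^sup>2 * real r) + sqrt (c * (1 / real nout - 1 / real nin)))
    + \<nu> * sqrt (exp 1) * sqrt t"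
  define Bad where "Bad = {S. S \<subseteq> Xin \<and> card S = nout \<and> thr \<le> MMD K (emp Xin) (emp S)}"
  have large: "L \<le> head S / (exp 1 * \<nu>\<^sup>2)" if "S \<in> Bad" for S
  proof -
    have S: "S \<subseteq> Xin" "card S = nout" and thr: "thr \<le> MMD K (emp Xin) (emp S)"
      using that by (auto simp: Bad_def)
    have "thr \<le> sqrt (head S) + sqrt (c * (1 / real nout - 1 / real nin))"
      using thr MMD_le_head_add_tail[OF quad nrm \<mu> c S(1)] S(2) nout nin
      by (simp add: head_def T_def)
    then have "\<nu> * sqrt (exp 1) + \<nu> * sqrt ((exp 1)\<^sup>2 * real r) + \<nu> * sqrt (exp 1) * sqrt t
        \<le> sqrt (head S)"
      by (simp add: thr_def)
    then show ?thesis
      unfolding L_def by (rule chernoff_exponent_le[OF \<nu> t])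
  qed
  have "{\<omega> \<in> space M. Xout \<omega> \<in> Bad} = Xout -` Bad \<inter> space M" by auto
  then have "E \<inter> {\<omega> \<in> space M. Xout \<omega> \<in> Bad} \<in> sets M"
    using measurable_sets[OF Xout, of Bad] E by auto
  then have "measure M (E \<inter> {\<omega> \<in> space M. thr \<le> MMD K (emp Xin) (emp (Xout \<omega>))})
      \<le> measure M (E \<inter> {\<omega> \<in> space M. Xout \<omega> \<in> Bad})"
    using out by (intro finite_measure_mono) (auto simp: Bad_def)
  also have "\<dots> \<le> exp (- L) * (\<Sum>S\<in>UNIV. p S * exp (head S / (exp 1 * \<nu>\<^sup>2)))"
    unfolding p_def by (rule measure_preimage_le_exp_sum[OF finite_measure_axioms Xout E large])
  also have "\<dots> \<le> exp (- L) * exp (exp 1 * real r)"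
  proof (intro mult_left_mono)
    have "(\<Sum>S\<in>UNIV. p S * exp (head S / (exp 1 * \<nu>\<^sup>2))) \<le> exp (exp 1 * real (card T))"
      unfolding p_def head_def
      by (rule sub_gaussian_event_exp_head_le[OF finite_measure_axioms Xout subg on ev T])
    also have "\<dots> \<le> exp (exp 1 * real r)"
      using \<open>card T \<le> r\<close> by simp
    finally show "(\<Sum>S\<in>UNIV. p S * exp (head S / (exp 1 * \<nu>\<^sup>2))) \<le> exp (exp 1 * real r)" .
  qed simp
  also have "\<dots> \<le> exp (- t)"
    by (simp add: L_def flip: exp_add)
  finally show ?thesis by (simp add: thr_def c_def)
qed

theorem lemmaI1:
  fixes M :: "'a measure" and k :: "'x \<Rightarrow> 'x \<Rightarrow> real" and x :: "'n::finite \<Rightarrow> 'x"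
    and Xin :: "'n set" and Xout :: "'a \<Rightarrow> 'n set"
    and nin nout :: nat and \<nu> \<delta> :: real and E :: "'a set"
  assumes "prob_space M"
    and "Xin \<noteq> {}" and "card Xin = nin"
    and "Xout \<in> M \<rightarrow>\<^sub>M count_space UNIV"
    and "\<And>\<omega>. \<omega> \<in> space M \<Longrightarrow> Xout \<omega> \<subseteq> Xin \<and> card (Xout \<omega>) = nout"
    and "0 < nout"
    and "sub_gaussian_event M Xin Xout (kernel_matrix k x) \<nu> \<delta> E"
  shows "k_sub_gaussian_on M Xin Xout (kernel_matrix k x) E
           (\<nu> * sqrt (exp 1) +
              Min ((\<lambda>r. \<nu> * sqrt ((exp 1)\<^sup>2 * real r)
                        + sqrt (eig (kernel_matrix k x) (r + 1) * (1 / real nout - 1 / real nin)))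
                   ` {0..nin}))
           (\<nu> * sqrt (exp 1))"
proof -
  define f where "f = (\<lambda>r. \<nu> * sqrt ((exp 1)\<^sup>2 * real r)
    + sqrt (eig (kernel_matrix k x) (r + 1) * (1 / real nout - 1 / real nin)))"
  have "Min (f ` {0..nin}) \<in> f ` {0..nin}" by (rule Min_in) auto
  then obtain r where r: "Min (f ` {0..nin}) = f r" by blast
  have "measure M (E \<inter> {\<omega> \<in> space M. \<nu> * sqrt (exp 1) + f r + \<nu> * sqrt (exp 1) * sqrt t
      \<le> MMD (kernel_matrix k x) (emp Xin) (emp (Xout \<omega>))}) \<le> exp (- t)" if "0 \<le> t" for t
    unfolding f_def by (rule mmd_tail_bound_rank[OF assms(1,4,5,6,3,7) that])
  then show ?thesis
    unfolding k_sub_gaussian_on_def f_def[symmetric] r by blast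
qed

end
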